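(* For any $\kappa_0>0$ and $\bar d>0$ there is a constant $C_{\kappa_0,\bar d}$ such that for every finite connected graph $\mathcal G=(V,E)$ with maximum degree at most $\bar d$ and $\kappa(\mathcal G)>\kappa_0$, and every $0<t\le|V|$, \[\frac{\max_x\int_0^tp_s(x,x)\,ds}{\min_x\int_0^tp_s(x,x)\,ds}+\max_x\int_0^tp_s(x,x)\,ds<C_{\kappa_0,\bar d}.\]
   Context: $p_s$ is the transition probability of the continuous-time simple random walk on $\mathcal G$ jumping across each incident edge at rate $1$. The vertex expansion constant is $\kappa(\mathcal G)=\min_{0<|S|\le|V|/2}|\partial S|/|S|$, where $\partial S=\{v\in V\setminus S:\exists u\in S,\ u\sim v\}$. *)

theory Defs
  imports "HOL-Analysis.Analysis" "HOL-Library.Extended_Real"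
begin

definition simple_graph :: "nat set \<Rightarrow> (nat \<Rightarrow> nat \<Rightarrow> bool) \<Rightarrow> bool" where
  "simple_graph V E \<longleftrightarrow> finite V \<and> V \<noteq> {} \<and> (\<forall>x y. E x y \<longrightarrow> E y x)
     \<and> (\<forall>x. \<not> E x x) \<and> (\<forall>x y. E x y \<longrightarrow> x \<in> V \<and> y \<in> V)"

definition connected_graph :: "nat set \<Rightarrow> (nat \<Rightarrow> nat \<Rightarrow> bool) \<Rightarrow> bool" where
  "connected_graph V E \<longleftrightarrow> (\<forall>x\<in>V. \<forall>y\<in>V. E\<^sup>*\<^sup>* x y)"

definition degree :: "nat set \<Rightarrow> (nat \<Rightarrow> nat \<Rightarrow> bool) \<Rightarrow> nat \<Rightarrow> nat" where
  "degree V E x = card {y \<in> V. E x y}"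

definition vboundary :: "nat set \<Rightarrow> (nat \<Rightarrow> nat \<Rightarrow> bool) \<Rightarrow> nat set \<Rightarrow> nat set" where
  "vboundary V E S = {v \<in> V - S. \<exists>u\<in>S. E u v}"

text \<open>Vertex expansion constant; the minimum over an empty family is +infinity.\<close>
definition vertex_expansion :: "nat set \<Rightarrow> (nat \<Rightarrow> nat \<Rightarrow> bool) \<Rightarrow> ereal" where
  "vertex_expansion V E = Inf {ereal (real (card (vboundary V E S)) / real (card S)) | S.
      S \<subseteq> V \<and> 0 < card S \<and> real (card S) \<le> real (card V) / 2}"

text \<open>Generator Q = A - D of the continuous-time simple random walk (rate 1 per edge).\<close>
definition generator :: "nat set \<Rightarrow> (nat \<Rightarrow> nat \<Rightarrow> bool) \<Rightarrow> nat \<Rightarrow> nat \<Rightarrow> real" where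
  "generator V E x y = (if E x y then 1 else 0) - (if x = y then real (degree V E x) else 0)"

fun gen_pow :: "nat set \<Rightarrow> (nat \<Rightarrow> nat \<Rightarrow> bool) \<Rightarrow> nat \<Rightarrow> nat \<Rightarrow> nat \<Rightarrow> real" where
  "gen_pow V E 0 x y = (if x = y then 1 else 0)"
| "gen_pow V E (Suc n) x y = (\<Sum>z\<in>V. generator V E x z * gen_pow V E n z y)"

definition heat_kernel :: "nat set \<Rightarrow> (nat \<Rightarrow> nat \<Rightarrow> bool) \<Rightarrow> real \<Rightarrow> nat \<Rightarrow> nat \<Rightarrow> real" where
  "heat_kernel V E s x y = (\<Sum>n. s ^ n / fact n * gen_pow V E n x y)"

end

theory Submission
  imports Defs
begin

(* Vertex expansion gives, by a discrete co-area argument and Cauchy-Schwarz, a Cheeger-type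
   Poincare inequality kappa^2 sum f^2 <= 4 d E(f) for mean-zero f, where E is the Dirichlet form.
   Hence the lazy walk P = I + Q/(2d) contracts mean-zero functions in l^2 by the factor
   rho = 1 - kappa^2/(16 d^2), and P^n(x,x) <= 1/|V| + rho^(n/2).  Uniformization,
   p_s = exp(-2ds) exp(2ds P), turns this into p_s(x,x) <= 1/|V| + exp(-b s) with
   b = 2d(1 - sqrt rho), while the zeroth term of the series gives p_s(x,x) >= exp(-2ds).
   Integrating, for t <= |V| every diagonal integral lies between min(t,1) exp(-2d) and
   min(2t, 1 + 1/b), which bounds both the ratio and the maximum in terms of kappa and d only. *)

section \<open>Powers of kernels on a finite set\<close>

fun kernel_pow :: "'a set \<Rightarrow> ('a \<Rightarrow> 'a \<Rightarrow> real) \<Rightarrow> nat \<Rightarrow> 'a \<Rightarrow> 'a \<Rightarrow> real" where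
  "kernel_pow V K 0 x y = (if x = y then 1 else 0)"
| "kernel_pow V K (Suc n) x y = (\<Sum>z\<in>V. K x z * kernel_pow V K n z y)"

lemma gen_pow_eq_kernel_pow: "gen_pow V E n x y = kernel_pow V (generator V E) n x y"
  by (induction n arbitrary: x) auto

lemma sum_delta_mult:
  assumes "finite V" and "x \<in> V"
  shows "(\<Sum>z\<in>V. (if x = z then 1 else 0) * f z) = (f x :: real)"
proof -
  have "(\<Sum>z\<in>V. (if x = z then 1 else 0) * f z) = (\<Sum>z\<in>V. if x = z then f z else 0)"
    by (rule sum.cong) auto
  then show ?thesis using assms by simp
qed

lemma binomial_sum_Suc:
  "(\<Sum>j\<le>n. real (n choose j) * b ^ (n - j) * K (Suc j)) + (\<Sum>j\<le>n. real (n choose j) * b ^ (Suc n - j) * K j)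
   = (\<Sum>j\<le>Suc n. real (Suc n choose j) * b ^ (Suc n - j) * (K j :: real))"
proof -
  have R: "(\<Sum>j\<le>Suc n. real (Suc n choose j) * b ^ (Suc n - j) * K j) =
     b ^ Suc n * K 0 + (\<Sum>i\<le>n. real (n choose i) * b ^ (n - i) * K (Suc i))
       + (\<Sum>i\<le>n. real (n choose Suc i) * b ^ (n - i) * K (Suc i))"
    by (subst sum.atMost_Suc_shift) (simp add: sum.distrib algebra_simps)
  have "(\<Sum>j\<le>n. real (n choose j) * b ^ (Suc n - j) * K j)
      = (\<Sum>j\<le>Suc n. real (n choose j) * b ^ (Suc n - j) * K j)"
    by simp
  also have "\<dots> = b ^ Suc n * K 0 + (\<Sum>i\<le>n. real (n choose Suc i) * b ^ (n - i) * K (Suc i))"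
    by (subst sum.atMost_Suc_shift) simp
  finally show ?thesis using R by simp
qed

lemma kernel_pow_binomial:
  assumes "finite V" and "x \<in> V"
    and Q: "\<And>w z. w \<in> V \<Longrightarrow> z \<in> V \<Longrightarrow> Q w z = a * (P w z - (if w = z then 1 else 0))"
  shows "kernel_pow V Q n x y
    = (\<Sum>j\<le>n. real (n choose j) * (- a) ^ (n - j) * (a ^ j * kernel_pow V P j x y))"
  using \<open>x \<in> V\<close>
proof (induction n arbitrary: x)
  case 0
  then show ?case by simp
next
  case (Suc n)
  define K where "K j = a ^ j * kernel_pow V P j x y" for j
  have step: "(\<Sum>z\<in>V. Q x z * kernel_pow V P j z y)
      = a * kernel_pow V P (Suc j) x y - a * kernel_pow V P j x y" for j
  proof -
    have "(\<Sum>z\<in>V. Q x z * kernel_pow V P j z y) = (\<Sum>z\<in>V. a * (P x z * kernel_pow V P j z y)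
        - a * ((if x = z then 1 else 0) * kernel_pow V P j z y))"
      by (intro sum.cong refl) (simp add: Q Suc.prems algebra_simps)
    then show ?thesis
      unfolding sum_subtractf sum_distrib_left[symmetric] sum_delta_mult[OF \<open>finite V\<close> Suc.prems] by simp
  qed
  have "kernel_pow V Q (Suc n) x y
      = (\<Sum>j\<le>n. real (n choose j) * (- a) ^ (n - j) * a ^ j * (\<Sum>z\<in>V. Q x z * kernel_pow V P j z y))"
    using Suc.IH by (simp add: sum_distrib_left sum_distrib_right mult_ac sum.swap[of _ V])
  also have "\<dots> = (\<Sum>j\<le>n. real (n choose j) * (- a) ^ (n - j) * K (Suc j)
                       + real (n choose j) * (- a) ^ (Suc n - j) * K j)"
  proof (intro sum.cong refl)
    fix j assume "j \<in> {..n}"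
    then have "Suc n - j = Suc (n - j)" by (simp add: Suc_diff_le)
    then show "real (n choose j) * (- a) ^ (n - j) * a ^ j * (\<Sum>z\<in>V. Q x z * kernel_pow V P j z y)
        = real (n choose j) * (- a) ^ (n - j) * K (Suc j) + real (n choose j) * (- a) ^ (Suc n - j) * K j"
      unfolding step K_def by (simp add: algebra_simps)
  qed
  also have "\<dots> = (\<Sum>j\<le>Suc n. real (Suc n choose j) * (- a) ^ (Suc n - j) * K j)"
    unfolding sum.distrib by (rule binomial_sum_Suc)
  finally show ?case unfolding K_def .
qed

lemma summable_exp_series_bounded:
  assumes "\<And>i. \<bar>u i\<bar> \<le> 1"
  shows "summable (\<lambda>i. c ^ i / fact i * u i :: real)"
proof (rule summable_comparison_test[OF _ summable_exp[of "\<bar>c\<bar>"]])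
  have "\<bar>c\<bar> ^ n * \<bar>u n\<bar> / fact n \<le> \<bar>c\<bar> ^ n / fact n" for n
    using assms[of n] by (intro divide_right_mono mult_left_le) auto
  then show "\<exists>N. \<forall>n\<ge>N. norm (c ^ n / fact n * u n) \<le> inverse (fact n) * \<bar>c\<bar> ^ n"
    by (auto simp: abs_mult power_abs divide_inverse mult.commute)
qed

lemma exp_sums: "(\<lambda>n. c ^ n / fact n :: real) sums exp c"
  using exp_converges[of c] by (simp add: divide_inverse mult.commute)

locale markov_kernel =
  fixes V :: "'a set" and P :: "'a \<Rightarrow> 'a \<Rightarrow> real"
  assumes finite: "finite V"
    and nonneg: "x \<in> V \<Longrightarrow> z \<in> V \<Longrightarrow> 0 \<le> P x z"
    and row_sum: "x \<in> V \<Longrightarrow> (\<Sum>z\<in>V. P x z) = 1"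
begin

lemma pow_nonneg: "x \<in> V \<Longrightarrow> 0 \<le> kernel_pow V P n x y"
  by (induction n arbitrary: x) (auto intro!: sum_nonneg mult_nonneg_nonneg nonneg)

lemma pow_le_1: "x \<in> V \<Longrightarrow> kernel_pow V P n x y \<le> 1"
proof (induction n arbitrary: x)
  case (Suc n)
  have "kernel_pow V P (Suc n) x y \<le> (\<Sum>z\<in>V. P x z)"
    using Suc by (auto intro!: sum_mono mult_left_le nonneg)
  then show ?case using row_sum[OF Suc.prems] by simp
qed simp

lemma pow_abs_le_1: "x \<in> V \<Longrightarrow> \<bar>kernel_pow V P n x y\<bar> \<le> 1"
  using pow_nonneg pow_le_1 by (simp add: abs_le_iff)

lemma summable_pow_exp_series: "x \<in> V \<Longrightarrow> summable (\<lambda>i. c ^ i / fact i * kernel_pow V P i x y)"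
  by (intro summable_exp_series_bounded pow_abs_le_1)

text \<open>Uniformization: Q = a (P - I) and I commutes with P, so exp (s Q) = exp (- a s) exp (a s P);
  the proof is the Cauchy product of the two exponential series.\<close>
lemma exp_series_uniformization:
  assumes x: "x \<in> V"
    and Q: "\<And>w z. w \<in> V \<Longrightarrow> z \<in> V \<Longrightarrow> Q w z = a * (P w z - (if w = z then 1 else 0))"
  shows "(\<Sum>n. s ^ n / fact n * kernel_pow V Q n x y)
    = exp (- a * s) * (\<Sum>i. (a * s) ^ i / fact i * kernel_pow V P i x y)"
proof -
  define \<alpha> where "\<alpha> i = (a * s) ^ i / fact i * kernel_pow V P i x y" for i
  define \<beta> where "\<beta> i = (- a * s) ^ i / fact i" for i
  have "summable (\<lambda>i. norm (\<alpha> i))"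
    using summable_exp_series_bounded[of "\<lambda>i. \<bar>kernel_pow V P i x y\<bar>" "\<bar>a * s\<bar>"] pow_abs_le_1[OF x]
    by (simp add: \<alpha>_def abs_mult power_abs)
  moreover have "summable (\<lambda>i. norm (\<beta> i))"
    using summable_exp_series_bounded[of "\<lambda>_. 1" "\<bar>a * s\<bar>"] by (simp add: \<beta>_def abs_mult power_abs)
  ultimately have "(\<Sum>n. \<Sum>i\<le>n. \<alpha> i * \<beta> (n - i)) = (\<Sum>i. \<alpha> i) * (\<Sum>i. \<beta> i)"
    by (rule Cauchy_product[symmetric])
  moreover have "(\<Sum>i\<le>n. \<alpha> i * \<beta> (n - i)) = s ^ n / fact n * kernel_pow V Q n x y" for n
  proof -
    have summand: "\<alpha> j * \<beta> (n - j)
        = s ^ n / fact n * (real (n choose j) * (- a) ^ (n - j) * (a ^ j * kernel_pow V P j x y))"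
      if "j \<le> n" for j
    proof -
      have s: "s ^ n = s ^ j * s ^ (n - j)" using that by (simp flip: power_add)
      have b: "real (n choose j) = fact n / (fact j * fact (n - j))" using binomial_fact[OF that] by simp
      have p: "(- a * s) ^ (n - j) = (- a) ^ (n - j) * s ^ (n - j)" "(a * s) ^ j = a ^ j * s ^ j"
        by (simp_all only: power_mult_distrib)
      show ?thesis unfolding \<alpha>_def \<beta>_def s b p by (simp add: field_simps)
    qed
    have "s ^ n / fact n * kernel_pow V Q n x y
        = (\<Sum>j\<le>n. s ^ n / fact n * (real (n choose j) * (- a) ^ (n - j) * (a ^ j * kernel_pow V P j x y)))"
      using kernel_pow_binomial[OF finite x Q] by (simp add: sum_distrib_left)
    also have "\<dots> = (\<Sum>j\<le>n. \<alpha> j * \<beta> (n - j))"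
      by (intro sum.cong refl) (simp add: summand)
    finally show ?thesis by simp
  qed
  moreover have "(\<Sum>i. \<beta> i) = exp (- a * s)"
    unfolding \<beta>_def using exp_sums sums_unique by metis
  ultimately show ?thesis unfolding \<alpha>_def by simp
qed

end

locale doubly_stochastic = markov_kernel +
  assumes col_sum: "z \<in> V \<Longrightarrow> (\<Sum>x\<in>V. P x z) = 1"
begin

lemma pow_col_sum: "y \<in> V \<Longrightarrow> (\<Sum>x\<in>V. kernel_pow V P n x y) = 1"
proof (induction n)
  case (Suc n)
  have "(\<Sum>x\<in>V. kernel_pow V P (Suc n) x y) = (\<Sum>z\<in>V. (\<Sum>x\<in>V. P x z) * kernel_pow V P n z y)"
    by (simp only: kernel_pow.simps, subst sum.swap) (simp add: sum_distrib_right)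
  then show ?case using Suc by (simp add: col_sum)
qed (simp add: finite)

lemma pow_diag_le_uniform_plus_gap:
  assumes gap: "\<And>f. (\<Sum>x\<in>V. f x) = 0 \<Longrightarrow> (\<Sum>x\<in>V. (\<Sum>z\<in>V. P x z * f z)\<^sup>2) \<le> \<rho> * (\<Sum>x\<in>V. (f x)\<^sup>2)"
    and "0 \<le> \<rho>" and y: "y \<in> V"
  shows "kernel_pow V P n y y \<le> 1 / card V + sqrt \<rho> ^ n"
proof -
  define N where "N = real (card V)"
  have "N > 0" unfolding N_def using finite y card_gt_0_iff by fastforce
  define F where "F j x = kernel_pow V P j x y - 1 / N" for j x
  have F_mean: "(\<Sum>x\<in>V. F j x) = 0" for j
    using pow_col_sum[OF y, of j] \<open>N > 0\<close> by (simp add: F_def sum_subtractf N_def)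
  have F_Suc: "F (Suc j) x = (\<Sum>z\<in>V. P x z * F j z)" if "x \<in> V" for j x
    using row_sum[OF that] by (simp add: F_def right_diff_distrib sum_subtractf flip: sum_divide_distrib)
  have F_norm: "(\<Sum>x\<in>V. (F j x)\<^sup>2) \<le> \<rho> ^ j" for j
  proof (induction j)
    case 0
    have "(\<Sum>x\<in>V. (F 0 x)\<^sup>2) = (\<Sum>x\<in>V. (if x = y then 1 - 2 / N else 0) + 1 / N\<^sup>2)"
      unfolding F_def using \<open>N > 0\<close> by (intro sum.cong refl) (simp add: power2_eq_square field_simps)
    also have "\<dots> = 1 - 2 / N + N * (1 / N\<^sup>2)"
      using finite y by (simp add: sum.distrib N_def)
    also have "\<dots> \<le> 1" using \<open>N > 0\<close> by (simp add: power2_eq_square field_simps)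
    finally show ?case by simp
  next
    case (Suc j)
    have "(\<Sum>x\<in>V. (F (Suc j) x)\<^sup>2) = (\<Sum>x\<in>V. (\<Sum>z\<in>V. P x z * F j z)\<^sup>2)"
      by (intro sum.cong refl) (simp add: F_Suc)
    also have "\<dots> \<le> \<rho> * \<rho> ^ j"
      using gap[OF F_mean] Suc \<open>0 \<le> \<rho>\<close> by (meson mult_left_mono order_trans)
    finally show ?case by simp
  qed
  have "(F n y)\<^sup>2 \<le> \<rho> ^ n"
    using member_le_sum[of y V "\<lambda>x. (F n x)\<^sup>2"] finite y F_norm[of n] by simp
  then have "F n y \<le> sqrt (\<rho> ^ n)"
    by (rule real_le_rsqrt)
  then show ?thesis unfolding F_def N_def by (simp add: real_sqrt_power)
qed

end

section \<open>Graphs of bounded degree and the lazy walk\<close>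

definition adj :: "('a \<Rightarrow> 'a \<Rightarrow> bool) \<Rightarrow> 'a \<Rightarrow> 'a \<Rightarrow> real" where
  "adj E x y = (if E x y then 1 else 0)"

text \<open>Each edge is counted twice, once in each direction.\<close>
definition dirichlet_form :: "'a set \<Rightarrow> ('a \<Rightarrow> 'a \<Rightarrow> bool) \<Rightarrow> ('a \<Rightarrow> real) \<Rightarrow> real" where
  "dirichlet_form V E f = (\<Sum>w\<in>V. \<Sum>z\<in>V. adj E w z * (f w - f z)\<^sup>2)"

definition lazy_walk :: "nat set \<Rightarrow> (nat \<Rightarrow> nat \<Rightarrow> bool) \<Rightarrow> real \<Rightarrow> nat \<Rightarrow> nat \<Rightarrow> real" where
  "lazy_walk V E d x z = (if x = z then 1 else 0) + generator V E x z / (2 * d)"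

lemma adj_nonneg: "0 \<le> adj E x y"
  by (simp add: adj_def)

lemma adj_mult_self: "adj E x y * adj E x y = adj E x y"
  by (simp add: adj_def)

lemma adj_mult_power2: "(adj E x y * t)\<^sup>2 = adj E x y * t\<^sup>2"
  by (simp add: adj_def)

lemma dirichlet_form_nonneg: "0 \<le> dirichlet_form V E f"
  unfolding dirichlet_form_def by (intro sum_nonneg mult_nonneg_nonneg adj_nonneg) auto

lemma Cauchy_Schwarz_double_sum:
  fixes f g :: "'a \<Rightarrow> 'b \<Rightarrow> real"
  shows "(\<Sum>x\<in>A. \<Sum>y\<in>B. f x y * g x y)\<^sup>2 \<le> (\<Sum>x\<in>A. \<Sum>y\<in>B. (f x y)\<^sup>2) * (\<Sum>x\<in>A. \<Sum>y\<in>B. (g x y)\<^sup>2)"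
  using Cauchy_Schwarz_ineq_sum[of "case_prod f" "case_prod g" "A \<times> B"]
  by (simp add: sum.cartesian_product split_def)

locale bounded_degree_graph =
  fixes V :: "nat set" and E :: "nat \<Rightarrow> nat \<Rightarrow> bool" and d :: real
  assumes graph: "simple_graph V E"
    and degree_le: "x \<in> V \<Longrightarrow> real (degree V E x) \<le> d"
    and d_pos: "0 < d"
begin

lemma finite_V: "finite V" and V_nonempty: "V \<noteq> {}"
  and E_sym: "E x y \<Longrightarrow> E y x" and E_irrefl: "\<not> E x x"
  using graph unfolding simple_graph_def by auto

lemma adj_sym: "adj E x y = adj E y x"
  using E_sym unfolding adj_def by metis

lemma degree_eq_sum_adj: "real (degree V E x) = (\<Sum>y\<in>V. adj E x y)"
proof -
  have "{y \<in> V. E x y} = V \<inter> Collect (E x)" by auto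
  then show ?thesis unfolding degree_def adj_def using finite_V by (simp add: sum.If_cases)
qed

lemma generator_action:
  assumes "x \<in> V"
  shows "(\<Sum>z\<in>V. generator V E x z * f z) = (\<Sum>z\<in>V. adj E x z * (f z - f x))"
proof -
  have "(\<Sum>z\<in>V. generator V E x z * f z)
      = (\<Sum>z\<in>V. adj E x z * f z) - (\<Sum>z\<in>V. (if x = z then real (degree V E x) else 0) * f z)"
    unfolding generator_def adj_def by (simp add: left_diff_distrib sum_subtractf)
  also have "(\<Sum>z\<in>V. (if x = z then real (degree V E x) else 0) * f z)
      = (\<Sum>z\<in>V. if x = z then real (degree V E x) * f z else 0)"
    by (rule sum.cong) auto
  also have "(\<Sum>z\<in>V. if x = z then real (degree V E x) * f z else 0) = (\<Sum>z\<in>V. adj E x z * f x)"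
    using finite_V assms by (simp add: degree_eq_sum_adj sum_distrib_right)
  finally show ?thesis by (simp add: algebra_simps sum_subtractf)
qed

lemma lazy_walk_action:
  assumes "x \<in> V"
  shows "(\<Sum>z\<in>V. lazy_walk V E d x z * f z) = f x + (\<Sum>z\<in>V. adj E x z * (f z - f x)) / (2 * d)"
proof -
  have "(\<Sum>z\<in>V. lazy_walk V E d x z * f z)
      = (\<Sum>z\<in>V. (if x = z then 1 else 0) * f z) + (\<Sum>z\<in>V. generator V E x z * f z) / (2 * d)"
    unfolding lazy_walk_def by (simp add: algebra_simps sum.distrib sum_divide_distrib)
  then show ?thesis
    by (simp add: sum_delta_mult[OF finite_V assms] generator_action[OF assms])
qed

lemma lazy_walk_nonneg:
  assumes "x \<in> V"
  shows "0 \<le> lazy_walk V E d x z"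
proof (cases "x = z")
  case True
  then have "generator V E x z = - real (degree V E x)"
    unfolding generator_def using E_irrefl by simp
  then show ?thesis
    using True degree_le[OF assms] d_pos unfolding lazy_walk_def by (simp add: field_simps)
next
  case False
  then show ?thesis unfolding lazy_walk_def generator_def using d_pos by simp
qed

lemma lazy_walk_sym: "lazy_walk V E d x z = lazy_walk V E d z x"
  unfolding lazy_walk_def generator_def using E_sym by auto

lemma lazy_walk_row_sum: "x \<in> V \<Longrightarrow> (\<Sum>z\<in>V. lazy_walk V E d x z) = 1"
  using lazy_walk_action[of x "\<lambda>_. 1"] by simp

sublocale lazy: doubly_stochastic V "lazy_walk V E d"
proof unfold_locales
  fix z assume "z \<in> V"
  then show "(\<Sum>x\<in>V. lazy_walk V E d x z) = 1"
    using lazy_walk_row_sum by (simp add: lazy_walk_sym[of _ z])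
qed (auto simp: finite_V lazy_walk_nonneg lazy_walk_row_sum)

lemma heat_kernel_uniformized:
  assumes "x \<in> V"
  shows "heat_kernel V E s x y
    = exp (- (2 * d) * s) * (\<Sum>i. (2 * d * s) ^ i / fact i * kernel_pow V (lazy_walk V E d) i x y)"
proof -
  have "generator V E w z = 2 * d * (lazy_walk V E d w z - (if w = z then 1 else 0))" for w z
    using d_pos by (simp add: lazy_walk_def)
  then show ?thesis
    unfolding heat_kernel_def gen_pow_eq_kernel_pow by (rule lazy.exp_series_uniformization[OF assms])
qed

lemma sum_mult_laplacian:
  "(\<Sum>w\<in>V. f w * (\<Sum>z\<in>V. adj E w z * (f z - f w))) = - dirichlet_form V E f / 2"
proof -
  define S where "S = (\<Sum>w\<in>V. \<Sum>z\<in>V. adj E w z * (f w * (f z - f w)))"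
  have "S = (\<Sum>w\<in>V. \<Sum>z\<in>V. adj E w z * (f z * (f w - f z)))"
    unfolding S_def by (subst sum.swap) (simp add: adj_sym)
  then have "S + S = (\<Sum>w\<in>V. \<Sum>z\<in>V. adj E w z * (f w * (f z - f w)) + adj E w z * (f z * (f w - f z)))"
    by (simp add: S_def sum.distrib)
  also have "\<dots> = - dirichlet_form V E f"
    unfolding dirichlet_form_def by (simp add: sum_negf[symmetric] power2_eq_square algebra_simps)
  moreover have "(\<Sum>w\<in>V. f w * (\<Sum>z\<in>V. adj E w z * (f z - f w))) = S"
    unfolding S_def by (simp add: sum_distrib_left algebra_simps)
  ultimately show ?thesis by simp
qed

lemma sum_laplacian_sq_le:
  "(\<Sum>w\<in>V. (\<Sum>z\<in>V. adj E w z * (f z - f w))\<^sup>2) \<le> d * dirichlet_form V E f"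
proof -
  have "(\<Sum>z\<in>V. adj E w z * (f z - f w))\<^sup>2 \<le> d * (\<Sum>z\<in>V. adj E w z * (f w - f z)\<^sup>2)" if "w \<in> V" for w
  proof -
    have "(\<Sum>z\<in>V. adj E w z * (f z - f w))\<^sup>2 = (\<Sum>z\<in>V. adj E w z * (adj E w z * (f z - f w)))\<^sup>2"
      by (simp add: adj_mult_self mult.assoc[symmetric])
    also have "\<dots> \<le> (\<Sum>z\<in>V. (adj E w z)\<^sup>2) * (\<Sum>z\<in>V. (adj E w z * (f z - f w))\<^sup>2)"
      by (rule Cauchy_Schwarz_ineq_sum)
    also have "\<dots> = real (degree V E w) * (\<Sum>z\<in>V. adj E w z * (f w - f z)\<^sup>2)"
      by (simp add: degree_eq_sum_adj power2_eq_square adj_mult_self algebra_simps)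
    also have "\<dots> \<le> d * (\<Sum>z\<in>V. adj E w z * (f w - f z)\<^sup>2)"
      using degree_le[OF that] by (intro mult_right_mono sum_nonneg mult_nonneg_nonneg adj_nonneg) auto
    finally show ?thesis .
  qed
  then show ?thesis
    unfolding dirichlet_form_def sum_distrib_left by (rule sum_mono)
qed

lemma lazy_walk_energy:
  "(\<Sum>w\<in>V. (\<Sum>z\<in>V. lazy_walk V E d w z * f z)\<^sup>2) \<le> (\<Sum>w\<in>V. (f w)\<^sup>2) - dirichlet_form V E f / (4 * d)"
proof -
  define g where "g w = (\<Sum>z\<in>V. adj E w z * (f z - f w))" for w
  have "(\<Sum>w\<in>V. (\<Sum>z\<in>V. lazy_walk V E d w z * f z)\<^sup>2) = (\<Sum>w\<in>V. (f w + g w / (2 * d))\<^sup>2)"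
    by (intro sum.cong refl) (simp add: lazy_walk_action g_def)
  also have "\<dots> = (\<Sum>w\<in>V. (f w)\<^sup>2 + f w * g w / d + (g w)\<^sup>2 / (4 * d\<^sup>2))"
    using d_pos by (intro sum.cong refl) (simp add: power2_eq_square field_simps)
  also have "\<dots> = (\<Sum>w\<in>V. (f w)\<^sup>2) + (\<Sum>w\<in>V. f w * g w) / d + (\<Sum>w\<in>V. (g w)\<^sup>2) / (4 * d\<^sup>2)"
    by (simp add: sum.distrib sum_divide_distrib)
  also have "\<dots> \<le> (\<Sum>w\<in>V. (f w)\<^sup>2) - dirichlet_form V E f / (2 * d) + d * dirichlet_form V E f / (4 * d\<^sup>2)"
    using sum_mult_laplacian[of f] sum_laplacian_sq_le[of f] d_pos
    unfolding g_def by (auto intro!: divide_right_mono)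
  also have "\<dots> = (\<Sum>w\<in>V. (f w)\<^sup>2) - dirichlet_form V E f / (4 * d)"
    using d_pos by (simp add: power2_eq_square field_simps)
  finally show ?thesis .
qed

lemma sum_adj_sum_sq_le: "(\<Sum>w\<in>V. \<Sum>z\<in>V. adj E w z * (h w + h z)\<^sup>2) \<le> 4 * d * (\<Sum>w\<in>V. (h w)\<^sup>2)"
proof -
  have "(\<Sum>w\<in>V. \<Sum>z\<in>V. adj E w z * (h w + h z)\<^sup>2)
      \<le> (\<Sum>w\<in>V. \<Sum>z\<in>V. 2 * (adj E w z * (h w)\<^sup>2) + 2 * (adj E w z * (h z)\<^sup>2))"
  proof (intro sum_mono)
    fix w z
    have "(h w + h z)\<^sup>2 \<le> 2 * (h w)\<^sup>2 + 2 * (h z)\<^sup>2"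
      using sum_squares_bound[of "h w" "h z"] by (simp add: power2_eq_square algebra_simps)
    then show "adj E w z * (h w + h z)\<^sup>2 \<le> 2 * (adj E w z * (h w)\<^sup>2) + 2 * (adj E w z * (h z)\<^sup>2)"
      using mult_left_mono[OF _ adj_nonneg] by (fastforce simp: algebra_simps)
  qed
  also have "\<dots> = 4 * (\<Sum>w\<in>V. \<Sum>z\<in>V. adj E w z * (h w)\<^sup>2)"
    by (simp add: sum.distrib sum_distrib_left[symmetric]) (subst (2) sum.swap, simp add: adj_sym)
  also have "\<dots> = 4 * (\<Sum>w\<in>V. real (degree V E w) * (h w)\<^sup>2)"
    by (simp add: degree_eq_sum_adj sum_distrib_right)
  also have "\<dots> \<le> 4 * (\<Sum>w\<in>V. d * (h w)\<^sup>2)"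
    using degree_le by (intro mult_left_mono sum_mono mult_right_mono) auto
  finally show ?thesis by (simp add: sum_distrib_left mult.assoc)
qed

end

section \<open>Vertex expansion and the Poincare inequality\<close>

lemma exists_median:
  fixes f :: "'a \<Rightarrow> real"
  assumes "finite V" and "V \<noteq> {}"
  shows "\<exists>m. real (card {w\<in>V. m < f w}) \<le> real (card V) / 2
    \<and> real (card {w\<in>V. f w < m}) \<le> real (card V) / 2"
proof -
  define M where "M = {v \<in> f ` V. real (card V) / 2 \<le> real (card {w\<in>V. f w \<le> v})}"
  have "{w\<in>V. f w \<le> Max (f ` V)} = V" using assms(1) by auto
  then have "Max (f ` V) \<in> M" unfolding M_def using assms by auto
  moreover have "finite M" unfolding M_def using assms(1) by auto
  ultimately have m: "Min M \<in> M" and m_least: "\<And>v. v \<in> M \<Longrightarrow> Min M \<le> v"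
    using Min_in Min_le by blast+
  define m where "m = Min M"
  have "card {w\<in>V. f w \<le> m} + card {w\<in>V. m < f w} = card V"
  proof -
    have "{w\<in>V. f w \<le> m} \<union> {w\<in>V. m < f w} = V" "{w\<in>V. f w \<le> m} \<inter> {w\<in>V. m < f w} = {}" by auto
    then show ?thesis using assms(1) card_Un_disjoint[of "{w\<in>V. f w \<le> m}" "{w\<in>V. m < f w}"] by simp
  qed
  then have "real (card {w\<in>V. m < f w}) \<le> real (card V) / 2"
    using m unfolding M_def m_def by auto
  moreover have "real (card {w\<in>V. f w < m}) \<le> real (card V) / 2"
  proof (rule ccontr)
    assume large: "\<not> ?thesis"
    define L where "L = {w\<in>V. f w < m}"
    have "finite L" unfolding L_def using assms(1) by auto
    moreover have "L \<noteq> {}" using large unfolding L_def[symmetric] by auto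
    ultimately have "Max (f ` L) \<in> f ` L" by simp
    then have below: "Max (f ` L) < m" and in_range: "Max (f ` L) \<in> f ` V" unfolding L_def by auto
    have "L \<subseteq> {w\<in>V. f w \<le> Max (f ` L)}" using \<open>finite L\<close> unfolding L_def by auto
    then have "card L \<le> card {w\<in>V. f w \<le> Max (f ` L)}" using assms(1) by (intro card_mono) auto
    then have "Max (f ` L) \<in> M" using large in_range unfolding M_def L_def by auto
    then show False using m_least below unfolding m_def by fastforce
  qed
  ultimately show ?thesis by blast
qed

lemma power2_diff_ge_pos_neg_parts:
  "(max u 0 - max v 0)\<^sup>2 + (max (- u) 0 - max (- v) 0)\<^sup>2 \<le> ((u :: real) - v)\<^sup>2"
proof (cases "u \<ge> 0"; cases "v \<ge> 0")
  assume "u \<ge> 0" "\<not> v \<ge> 0"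
  then have "u * v \<le> 0" by (simp add: mult_nonneg_nonpos)
  then show ?thesis using \<open>u \<ge> 0\<close> \<open>\<not> v \<ge> 0\<close> by (simp add: power2_eq_square max_def algebra_simps)
next
  assume "\<not> u \<ge> 0" "v \<ge> 0"
  then have "u * v \<le> 0" by (simp add: mult_nonpos_nonneg)
  then show ?thesis using \<open>\<not> u \<ge> 0\<close> \<open>v \<ge> 0\<close> by (simp add: power2_eq_square max_def algebra_simps)
qed (auto simp: power2_eq_square max_def algebra_simps)

definition contraction_factor :: "real \<Rightarrow> real \<Rightarrow> real" where
  "contraction_factor \<kappa> d = max 0 (1 - \<kappa>\<^sup>2 / (16 * d\<^sup>2))"

definition decay_rate :: "real \<Rightarrow> real \<Rightarrow> real" where
  "decay_rate \<kappa> d = 2 * d * (1 - sqrt (contraction_factor \<kappa> d))"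

lemma decay_rate_pos: "0 < \<kappa> \<Longrightarrow> 0 < d \<Longrightarrow> 0 < decay_rate \<kappa> d"
  unfolding decay_rate_def contraction_factor_def by (simp add: real_sqrt_lt_1_iff)

locale vertex_expander = bounded_degree_graph +
  fixes \<kappa> :: real
  assumes \<kappa>_pos: "0 < \<kappa>"
    and expansion: "ereal \<kappa> < vertex_expansion V E"
begin

lemma card_vboundary_ge:
  assumes "S \<subseteq> V" and "0 < card S" and "real (card S) \<le> real (card V) / 2"
  shows "\<kappa> * real (card S) \<le> real (card (vboundary V E S))"
proof -
  have "vertex_expansion V E \<le> ereal (real (card (vboundary V E S)) / real (card S))"
    unfolding vertex_expansion_def using assms by (intro Inf_lower) blast
  then have "ereal \<kappa> < ereal (real (card (vboundary V E S)) / real (card S))"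
    using expansion by (rule order.strict_trans2[rotated])
  then have "\<kappa> < real (card (vboundary V E S)) / real (card S)" by simp
  then show ?thesis using assms(2) by (simp add: pos_less_divide_eq less_imp_le)
qed

lemma card_vboundary_le_cut:
  assumes "S \<subseteq> V"
  shows "real (card (vboundary V E S)) \<le> (\<Sum>w\<in>V. \<Sum>z\<in>V. adj E w z * \<bar>indicator S w - indicator S z\<bar>)"
proof -
  let ?cut = "\<lambda>w. \<Sum>z\<in>V. adj E w z * \<bar>indicator S w - indicator S z :: real\<bar>"
  have "1 \<le> ?cut w" if w: "w \<in> vboundary V E S" for w
  proof -
    obtain u where u: "u \<in> S" "E u w" "w \<notin> S" using w unfolding vboundary_def by auto
    then have "adj E w u * \<bar>indicator S w - indicator S u :: real\<bar> = 1"
      using E_sym unfolding adj_def by auto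
    moreover have "adj E w u * \<bar>indicator S w - indicator S u :: real\<bar> \<le> ?cut w"
      using u assms finite_V
      by (intro member_le_sum[where f="\<lambda>z. adj E w z * \<bar>indicator S w - indicator S z :: real\<bar>"])
         (auto intro!: mult_nonneg_nonneg adj_nonneg)
    ultimately show ?thesis by simp
  qed
  then have "real (card (vboundary V E S)) \<le> (\<Sum>w\<in>vboundary V E S. ?cut w)"
    using sum_mono[of "vboundary V E S" "\<lambda>_. 1 :: real" ?cut] by simp
  also have "\<dots> \<le> (\<Sum>w\<in>V. ?cut w)"
    using finite_V
    by (intro sum_mono2) (auto simp: vboundary_def intro!: sum_nonneg mult_nonneg_nonneg adj_nonneg)
  finally show ?thesis .
qed

text \<open>Discrete co-area argument: peel off the level set of the smallest positive value of g
  and apply the expansion bound to it.\<close>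
lemma coarea_inequality:
  assumes "\<forall>w\<in>V. 0 \<le> g w" and "real (card {w\<in>V. 0 < g w}) \<le> real (card V) / 2"
  shows "\<kappa> * (\<Sum>w\<in>V. g w) \<le> (\<Sum>w\<in>V. \<Sum>z\<in>V. adj E w z * \<bar>g w - g z\<bar>)"
  using assms
proof (induction "card {w\<in>V. 0 < g w}" arbitrary: g rule: less_induct)
  case less
  define S where "S = {w\<in>V. 0 < g w}"
  show ?case
  proof (cases "S = {}")
    case True
    then have "\<forall>w\<in>V. g w = 0" using less.prems unfolding S_def by force
    then show ?thesis by (simp add: sum_nonneg adj_nonneg)
  next
    case False
    have S: "finite S" "S \<subseteq> V" using finite_V unfolding S_def by auto
    define c where "c = Min (g ` S)"
    have "c \<in> g ` S" unfolding c_def using S False by (intro Min_in) auto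
    then obtain w0 where w0: "w0 \<in> S" "g w0 = c" by auto
    have c_pos: "0 < c" using w0 unfolding S_def by auto
    have c_le: "c \<le> g w" if "w \<in> S" for w unfolding c_def using S that by auto
    define g' where "g' w = (if w \<in> S then g w - c else 0)" for w
    have "{w\<in>V. 0 < g' w} \<subseteq> S - {w0}" unfolding g'_def using w0 by auto
    then have card_less: "card {w\<in>V. 0 < g' w} < card S" and card_le: "card {w\<in>V. 0 < g' w} \<le> card S"
      using S w0 by (meson card_Diff1_less card_mono finite_Diff le_less_trans less_imp_le)+
    have IH: "\<kappa> * (\<Sum>w\<in>V. g' w) \<le> (\<Sum>w\<in>V. \<Sum>z\<in>V. adj E w z * \<bar>g' w - g' z\<bar>)"
      using less.hyps[of g'] card_less card_le less.prems c_le unfolding S_def g'_def by fastforce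
    have abs_split: "\<bar>g w - g z\<bar> = c * \<bar>indicator S w - indicator S z\<bar> + \<bar>g' w - g' z\<bar>"
      if "w \<in> V" "z \<in> V" for w z
      using that c_le[of w] c_le[of z] c_pos less.prems(1) unfolding g'_def S_def
      by (auto simp: abs_if indicator_def)
    have "(\<Sum>w\<in>V. g w) = (\<Sum>w\<in>V. c * indicator S w + g' w)"
      using less.prems(1) unfolding g'_def S_def by (intro sum.cong) (auto simp: indicator_def)
    also have "\<dots> = c * real (card S) + (\<Sum>w\<in>V. g' w)"
      using S finite_V by (simp add: sum.distrib indicator_def sum.If_cases Int_absorb1 flip: sum_distrib_left)
    finally have "\<kappa> * (\<Sum>w\<in>V. g w) = c * (\<kappa> * real (card S)) + \<kappa> * (\<Sum>w\<in>V. g' w)"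
      by (simp add: algebra_simps)
    also have "\<dots> \<le> c * (\<Sum>w\<in>V. \<Sum>z\<in>V. adj E w z * \<bar>indicator S w - indicator S z\<bar>)
        + (\<Sum>w\<in>V. \<Sum>z\<in>V. adj E w z * \<bar>g' w - g' z\<bar>)"
      using card_vboundary_ge[OF S(2)] card_vboundary_le_cut[OF S(2)] less.prems(2) False S c_pos IH
      unfolding S_def by (intro add_mono mult_left_mono) (auto simp: card_gt_0_iff)
    also have "\<dots> = (\<Sum>w\<in>V. \<Sum>z\<in>V. adj E w z * \<bar>g w - g z\<bar>)"
      by (simp add: abs_split sum.distrib sum_distrib_left algebra_simps cong: sum.cong)
    finally show ?thesis .
  qed
qed

lemma l2_expansion:
  assumes h_nonneg: "\<forall>w\<in>V. 0 \<le> h w" and small: "real (card {w\<in>V. 0 < h w}) \<le> real (card V) / 2"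
  shows "\<kappa>\<^sup>2 * (\<Sum>w\<in>V. (h w)\<^sup>2) \<le> 4 * d * dirichlet_form V E h"
proof -
  define X where "X = (\<Sum>w\<in>V. (h w)\<^sup>2)"
  have "0 \<le> X" unfolding X_def by (simp add: sum_nonneg)
  have "{w\<in>V. 0 < (h w)\<^sup>2} = {w\<in>V. 0 < h w}" using h_nonneg by force
  then have "\<kappa> * X \<le> (\<Sum>w\<in>V. \<Sum>z\<in>V. adj E w z * \<bar>(h w)\<^sup>2 - (h z)\<^sup>2\<bar>)"
    unfolding X_def using coarea_inequality[of "\<lambda>w. (h w)\<^sup>2"] small by simp
  also have "\<dots> = (\<Sum>w\<in>V. \<Sum>z\<in>V. (adj E w z * \<bar>h w - h z\<bar>) * (adj E w z * (h w + h z)))"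
  proof (intro sum.cong refl)
    fix w z assume "w \<in> V" "z \<in> V"
    moreover have "(h w)\<^sup>2 - (h z)\<^sup>2 = (h w - h z) * (h w + h z)"
      by (simp add: power2_eq_square algebra_simps)
    ultimately have "\<bar>(h w)\<^sup>2 - (h z)\<^sup>2\<bar> = \<bar>h w - h z\<bar> * (h w + h z)"
      using h_nonneg by (simp add: abs_mult)
    then show "adj E w z * \<bar>(h w)\<^sup>2 - (h z)\<^sup>2\<bar> = (adj E w z * \<bar>h w - h z\<bar>) * (adj E w z * (h w + h z))"
      by (simp add: adj_def)
  qed
  finally have "(\<kappa> * X)\<^sup>2 \<le> (\<Sum>w\<in>V. \<Sum>z\<in>V. (adj E w z * \<bar>h w - h z\<bar>) * (adj E w z * (h w + h z)))\<^sup>2"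
    using \<kappa>_pos \<open>0 \<le> X\<close> by (intro power_mono) auto
  also have "\<dots> \<le> (\<Sum>w\<in>V. \<Sum>z\<in>V. (adj E w z * \<bar>h w - h z\<bar>)\<^sup>2) * (\<Sum>w\<in>V. \<Sum>z\<in>V. (adj E w z * (h w + h z))\<^sup>2)"
    by (rule Cauchy_Schwarz_double_sum)
  also have "\<dots> = dirichlet_form V E h * (\<Sum>w\<in>V. \<Sum>z\<in>V. adj E w z * (h w + h z)\<^sup>2)"
    unfolding dirichlet_form_def by (simp add: adj_mult_power2)
  also have "\<dots> \<le> dirichlet_form V E h * (4 * d * X)"
    unfolding X_def by (intro mult_left_mono sum_adj_sum_sq_le dirichlet_form_nonneg)
  finally have "(\<kappa>\<^sup>2 * X) * X \<le> (4 * d * dirichlet_form V E h) * X"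
    by (simp add: power2_eq_square algebra_simps)
  then show ?thesis
    using \<open>0 \<le> X\<close> d_pos dirichlet_form_nonneg[of V E h] unfolding X_def[symmetric]
    by (cases "X = 0") (auto dest: mult_right_le_imp_le)
qed

text \<open>Split f at a median m into the parts above and below m; each has support of at most half
  the vertices, so the expansion bound applies to both.\<close>
lemma poincare_inequality:
  assumes mean_zero: "(\<Sum>w\<in>V. f w) = 0"
  shows "\<kappa>\<^sup>2 * (\<Sum>w\<in>V. (f w)\<^sup>2) \<le> 4 * d * dirichlet_form V E f"
proof -
  obtain m where above: "real (card {w\<in>V. m < f w}) \<le> real (card V) / 2"
    and below: "real (card {w\<in>V. f w < m}) \<le> real (card V) / 2"
    using exists_median[OF finite_V V_nonempty] by blast
  define fp where "fp w = max (f w - m) 0" for w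
  define fm where "fm w = max (m - f w) 0" for w
  have "{w\<in>V. 0 < fp w} = {w\<in>V. m < f w}" "{w\<in>V. 0 < fm w} = {w\<in>V. f w < m}"
    unfolding fp_def fm_def by auto
  then have l2: "\<kappa>\<^sup>2 * (\<Sum>w\<in>V. (fp w)\<^sup>2) \<le> 4 * d * dirichlet_form V E fp"
      "\<kappa>\<^sup>2 * (\<Sum>w\<in>V. (fm w)\<^sup>2) \<le> 4 * d * dirichlet_form V E fm"
    using l2_expansion[of fp] l2_expansion[of fm] above below by (auto simp: fp_def fm_def)
  have energy_split: "dirichlet_form V E fp + dirichlet_form V E fm \<le> dirichlet_form V E f"
    unfolding dirichlet_form_def sum.distrib[symmetric] distrib_left[symmetric]
    using power2_diff_ge_pos_neg_parts[of "f _ - m" "f _ - m"]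
    by (intro sum_mono mult_left_mono adj_nonneg) (simp add: fp_def fm_def)
  have mass_split: "(\<Sum>w\<in>V. (f w)\<^sup>2) \<le> (\<Sum>w\<in>V. (fp w)\<^sup>2) + (\<Sum>w\<in>V. (fm w)\<^sup>2)"
  proof -
    have "(\<Sum>w\<in>V. (fp w)\<^sup>2) + (\<Sum>w\<in>V. (fm w)\<^sup>2) = (\<Sum>w\<in>V. (f w)\<^sup>2 - 2 * m * f w + m\<^sup>2)"
      unfolding sum.distrib[symmetric]
      by (intro sum.cong refl) (auto simp: fp_def fm_def max_def power2_eq_square algebra_simps)
    also have "\<dots> = (\<Sum>w\<in>V. (f w)\<^sup>2) + real (card V) * m\<^sup>2"
      using mean_zero by (simp add: sum.distrib sum_subtractf flip: sum_distrib_left)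
    finally show ?thesis by simp
  qed
  have "\<kappa>\<^sup>2 * (\<Sum>w\<in>V. (f w)\<^sup>2) \<le> \<kappa>\<^sup>2 * ((\<Sum>w\<in>V. (fp w)\<^sup>2) + (\<Sum>w\<in>V. (fm w)\<^sup>2))"
    using mass_split by (intro mult_left_mono) auto
  also have "\<dots> \<le> 4 * d * dirichlet_form V E fp + 4 * d * dirichlet_form V E fm"
    using l2 by (simp add: distrib_left)
  also have "\<dots> \<le> 4 * d * dirichlet_form V E f"
    using energy_split d_pos by (simp flip: distrib_left)
  finally show ?thesis .
qed

lemma lazy_walk_contraction:
  assumes "(\<Sum>w\<in>V. f w) = 0"
  shows "(\<Sum>w\<in>V. (\<Sum>z\<in>V. lazy_walk V E d w z * f z)\<^sup>2) \<le> contraction_factor \<kappa> d * (\<Sum>w\<in>V. (f w)\<^sup>2)"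
proof -
  define X where "X = (\<Sum>w\<in>V. (f w)\<^sup>2)"
  have "0 \<le> X" unfolding X_def by (simp add: sum_nonneg)
  have "\<kappa>\<^sup>2 * X / (16 * d\<^sup>2) = (\<kappa>\<^sup>2 * X / (4 * d)) / (4 * d)"
    using d_pos by (simp add: power2_eq_square field_simps)
  also have "\<dots> \<le> dirichlet_form V E f / (4 * d)"
    using poincare_inequality[OF assms] d_pos unfolding X_def
    by (intro divide_right_mono) (auto simp: field_simps)
  finally have "X - dirichlet_form V E f / (4 * d) \<le> (1 - \<kappa>\<^sup>2 / (16 * d\<^sup>2)) * X"
    by (simp add: algebra_simps)
  also have "\<dots> \<le> contraction_factor \<kappa> d * X"
    unfolding contraction_factor_def using \<open>0 \<le> X\<close> by (intro mult_right_mono) auto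
  finally show ?thesis
    using lazy_walk_energy[of f] unfolding X_def by linarith
qed

lemma return_probability_le:
  "x \<in> V \<Longrightarrow> kernel_pow V (lazy_walk V E d) n x x \<le> 1 / card V + sqrt (contraction_factor \<kappa> d) ^ n"
  by (intro lazy.pow_diag_le_uniform_plus_gap lazy_walk_contraction) (auto simp: contraction_factor_def)

end

section \<open>Bounds on the diagonal heat kernel\<close>

lemma Max_div_Min_le:
  fixes g :: "'a \<Rightarrow> real"
  assumes "finite A" and "A \<noteq> {}" and "0 < lo" and bounds: "\<And>x. x \<in> A \<Longrightarrow> lo \<le> g x \<and> g x \<le> hi"
  shows "Max (g ` A) / Min (g ` A) \<le> hi / lo" and "Max (g ` A) \<le> hi"
proof -
  have Max: "Max (g ` A) \<le> hi" and Min: "lo \<le> Min (g ` A)"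
    using assms by auto
  then show "Max (g ` A) \<le> hi" by blast
  obtain x where "x \<in> A" using assms(2) by blast
  then have "g x \<le> Max (g ` A)" using assms(1) by simp
  then have "0 \<le> Max (g ` A)" using bounds[OF \<open>x \<in> A\<close>] \<open>0 < lo\<close> by linarith
  then have "Max (g ` A) / Min (g ` A) \<le> Max (g ` A) / lo"
    using Min \<open>0 < lo\<close> by (intro divide_left_mono) auto
  also have "\<dots> \<le> hi / lo"
    using Max \<open>0 < lo\<close> by (intro divide_right_mono) auto
  finally show "Max (g ` A) / Min (g ` A) \<le> hi / lo" .
qed

lemma min_ratio_le:
  fixes t b a :: real
  assumes "0 < t" and "0 < b"
  shows "min (2 * t) (1 + 1 / b) / (min t 1 * exp (- a)) \<le> (2 + 1 / b) * exp a"
proof (cases "t \<le> 1")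
  case True
  then have "min t 1 = t" by simp
  have "min (2 * t) (1 + 1 / b) / (t * exp (- a)) \<le> 2 * t / (t * exp (- a))"
    using assms by (intro divide_right_mono) auto
  then have "min (2 * t) (1 + 1 / b) / (min t 1 * exp (- a)) \<le> 2 * t / (t * exp (- a))"
    unfolding \<open>min t 1 = t\<close> .
  also have "\<dots> = 2 * exp a" using assms by (simp add: exp_minus field_simps)
  also have "\<dots> \<le> (2 + 1 / b) * exp a" using assms by (intro mult_right_mono) auto
  finally show ?thesis .
next
  case False
  then have "min t 1 = 1" by simp
  have "min (2 * t) (1 + 1 / b) / exp (- a) \<le> (1 + 1 / b) / exp (- a)"
    by (intro divide_right_mono) auto
  then have "min (2 * t) (1 + 1 / b) / (min t 1 * exp (- a)) \<le> (1 + 1 / b) / exp (- a)"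
    unfolding \<open>min t 1 = 1\<close> by simp
  also have "\<dots> = (1 + 1 / b) * exp a" by (simp add: exp_minus field_simps)
  also have "\<dots> \<le> (2 + 1 / b) * exp a" by (intro mult_right_mono) auto
  finally show ?thesis .
qed

context vertex_expander
begin

lemma heat_kernel_diag_ge:
  assumes "x \<in> V" and "0 \<le> s"
  shows "exp (- (2 * d) * s) \<le> heat_kernel V E s x x"
proof -
  have "(\<Sum>i\<in>{0}. (2 * d * s) ^ i / fact i * kernel_pow V (lazy_walk V E d) i x x)
      \<le> (\<Sum>i. (2 * d * s) ^ i / fact i * kernel_pow V (lazy_walk V E d) i x x)"
    using assms d_pos
    by (intro sum_le_suminf lazy.summable_pow_exp_series)
      (auto intro!: divide_nonneg_nonneg mult_nonneg_nonneg lazy.pow_nonneg)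
  then show ?thesis
    by (simp add: heat_kernel_uniformized[OF assms(1)] mult_le_cancel_left1)
qed

lemma heat_kernel_diag_le:
  assumes "x \<in> V" and "0 \<le> s"
  shows "heat_kernel V E s x x \<le> 1 / card V + exp (- decay_rate \<kappa> d * s)"
proof -
  define r where "r = sqrt (contraction_factor \<kappa> d)"
  let ?c = "\<lambda>i. (2 * d * s) ^ i / fact i"
  have split: "?c i * (1 / card V + r ^ i) = ?c i * (1 / card V) + (2 * d * s * r) ^ i / fact i" for i
    by (simp add: power_mult_distrib field_simps)
  have "(\<lambda>i. ?c i * (1 / card V) + (2 * d * s * r) ^ i / fact i)
      sums (exp (2 * d * s) * (1 / card V) + exp (2 * d * s * r))"
    by (intro sums_add sums_mult2 exp_sums)
  then have majorant:
    "(\<lambda>i. ?c i * (1 / card V + r ^ i)) sums (exp (2 * d * s) * (1 / card V) + exp (2 * d * s * r))"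
    unfolding split .
  have "kernel_pow V (lazy_walk V E d) i x x \<le> 1 / card V + r ^ i" for i
    using return_probability_le[OF assms(1)] unfolding r_def .
  then have "(\<Sum>i. ?c i * kernel_pow V (lazy_walk V E d) i x x) \<le> (\<Sum>i. ?c i * (1 / card V + r ^ i))"
    using assms d_pos
    by (intro suminf_le mult_left_mono lazy.summable_pow_exp_series sums_summable[OF majorant]) auto
  then have "heat_kernel V E s x x
      \<le> exp (- (2 * d) * s) * (exp (2 * d * s) * (1 / card V) + exp (2 * d * s * r))"
    unfolding heat_kernel_uniformized[OF assms(1)] sums_unique[OF majorant, symmetric]
    by (intro mult_left_mono) auto
  also have "\<dots> = 1 / card V + exp (- decay_rate \<kappa> d * s)"
    unfolding decay_rate_def r_def by (simp add: distrib_left algebra_simps flip: exp_add)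
  finally show ?thesis .
qed

lemma continuous_on_heat_kernel_diag:
  assumes "x \<in> V"
  shows "continuous_on A (\<lambda>s. heat_kernel V E s x x)"
proof -
  define c where "c i = (2 * d) ^ i / fact i * kernel_pow V (lazy_walk V E d) i x x" for i
  have term_eq: "(2 * d * s) ^ i / fact i * kernel_pow V (lazy_walk V E d) i x x = c i * s ^ i" for s i
    by (simp add: c_def power_mult_distrib)
  have "summable (\<lambda>i. c i * s ^ i)" for s
    using lazy.summable_pow_exp_series[OF assms, of "2 * d * s" x] unfolding term_eq .
  then have "continuous_on A (\<lambda>s. \<Sum>i. c i * s ^ i)"
    by (intro continuous_at_imp_continuous_on ballI isCont_powser_converges_everywhere)
  then show ?thesis
    unfolding heat_kernel_uniformized[OF assms] term_eq by (intro continuous_intros)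
qed

lemma heat_kernel_diag_integrable: "x \<in> V \<Longrightarrow> (\<lambda>s. heat_kernel V E s x x) integrable_on {u..v}"
  by (intro integrable_continuous_interval continuous_on_heat_kernel_diag)

lemma heat_integral_ge:
  assumes "x \<in> V" and "0 < t"
  shows "min t 1 * exp (- (2 * d)) \<le> integral {0..t} (\<lambda>s. heat_kernel V E s x x)"
proof -
  have lower: "exp (- (2 * d)) \<le> heat_kernel V E s x x" if "s \<in> {0..1}" for s
  proof -
    have "exp (- (2 * d)) \<le> exp (- (2 * d) * s)" using that d_pos by (simp add: mult_le_cancel_left1)
    also have "\<dots> \<le> heat_kernel V E s x x" using heat_kernel_diag_ge[OF assms(1), of s] that by simp
    finally show ?thesis .
  qed
  have "min t 1 * exp (- (2 * d)) = integral {0..min t 1} (\<lambda>s. exp (- (2 * d)))"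
    using assms(2) by simp
  also have "\<dots> \<le> integral {0..min t 1} (\<lambda>s. heat_kernel V E s x x)"
    using lower by (intro integral_le heat_kernel_diag_integrable[OF assms(1)]) auto
  also have "\<dots> \<le> integral {0..t} (\<lambda>s. heat_kernel V E s x x)"
    using heat_kernel_diag_ge[OF assms(1)]
    by (intro integral_subset_le heat_kernel_diag_integrable[OF assms(1)] ballI)
       (auto intro: order_trans[OF less_imp_le[OF exp_gt_zero]])
  finally show ?thesis .
qed

lemma heat_integral_le:
  assumes "x \<in> V" and "0 \<le> t"
  shows "integral {0..t} (\<lambda>s. heat_kernel V E s x x) \<le> t / card V + min t (1 / decay_rate \<kappa> d)"
proof -
  define b where "b = decay_rate \<kappa> d"
  have "0 < b" unfolding b_def using decay_rate_pos \<kappa>_pos d_pos by blast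
  have "0 < card V" using finite_V V_nonempty by (simp add: card_gt_0_iff)
  have "((\<lambda>s. s / card V - exp (- b * s) / b) has_real_derivative (1 / card V + exp (- b * s)))
      (at s within {0..t})" for s
    using \<open>0 < b\<close> \<open>0 < card V\<close> by (auto intro!: derivative_eq_intros simp: field_simps)
  then have "((\<lambda>s. s / card V - exp (- b * s) / b) has_vector_derivative (1 / card V + exp (- b * s)))
      (at s within {0..t})" for s
    by (simp add: has_real_derivative_iff_has_vector_derivative)
  then have "((\<lambda>s. 1 / card V + exp (- b * s))
      has_integral (t / card V - exp (- b * t) / b) - (0 / card V - exp (- b * 0) / b)) {0..t}"
    by (rule fundamental_theorem_of_calculus[OF assms(2)])
  then have "integral {0..t} (\<lambda>s. heat_kernel V E s x x)
      \<le> (t / card V - exp (- b * t) / b) - (0 / card V - exp (- b * 0) / b)"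
    using heat_kernel_diag_le[OF assms(1)] unfolding b_def
    by (intro has_integral_le[OF integrable_integral[OF heat_kernel_diag_integrable[OF assms(1)]]]) auto
  also have "\<dots> = t / card V + (1 - exp (- b * t)) / b"
    by (simp add: diff_divide_distrib algebra_simps)
  finally have "integral {0..t} (\<lambda>s. heat_kernel V E s x x) \<le> t / card V + (1 - exp (- b * t)) / b" .
  moreover have "(1 - exp (- b * t)) / b \<le> min t (1 / b)"
    using exp_ge_add_one_self[of "- b * t"] \<open>0 < b\<close> assms(2) by (auto simp: field_simps)
  ultimately show ?thesis unfolding b_def by linarith
qed

lemma heat_integral_ratio_bound:
  assumes "0 < t" and "t \<le> real (card V)"
  defines "I \<equiv> \<lambda>x. integral {0..t} (\<lambda>s. heat_kernel V E s x x)"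
  shows "Max (I ` V) / Min (I ` V) + Max (I ` V)
    \<le> (2 + 1 / decay_rate \<kappa> d) * exp (2 * d) + (1 + 1 / decay_rate \<kappa> d)"
proof -
  define b where "b = decay_rate \<kappa> d"
  have "0 < b" unfolding b_def using decay_rate_pos \<kappa>_pos d_pos by blast
  have "1 \<le> real (card V)" using finite_V V_nonempty by (simp add: Suc_leI card_gt_0_iff)
  then have "t / card V \<le> t" "t / card V \<le> 1"
    using assms(1,2) by (auto simp: divide_le_eq)
  have "min t 1 * exp (- (2 * d)) \<le> I x \<and> I x \<le> min (2 * t) (1 + 1 / b)" if "x \<in> V" for x
  proof -
    have "I x \<le> t / card V + min t (1 / b)"
      using heat_integral_le[OF that] assms(1) unfolding I_def b_def by simp
    moreover have "min t (1 / b) \<le> t" "min t (1 / b) \<le> 1 / b" by simp_all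
    ultimately have "I x \<le> 2 * t" "I x \<le> 1 + 1 / b"
      using \<open>t / card V \<le> t\<close> \<open>t / card V \<le> 1\<close> by linarith+
    then show ?thesis using heat_integral_ge[OF that assms(1)] unfolding I_def by simp
  qed
  then have "Max (I ` V) / Min (I ` V) \<le> min (2 * t) (1 + 1 / b) / (min t 1 * exp (- (2 * d)))"
      and "Max (I ` V) \<le> min (2 * t) (1 + 1 / b)"
    using Max_div_Min_le[OF finite_V V_nonempty, of "min t 1 * exp (- (2 * d))"] assms(1) by auto
  then show ?thesis
    using min_ratio_le[OF assms(1) \<open>0 < b\<close>, of "2 * d"] unfolding b_def by linarith
qed

end

theorem lemma2p9:
  fixes \<kappa>0 dbar :: real
  assumes "\<kappa>0 > 0" and "dbar > 0"
  shows "\<exists>C::real. \<forall>V E (t::real).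
    simple_graph V E \<and> connected_graph V E \<and> (\<forall>x\<in>V. real (degree V E x) \<le> dbar)
    \<and> vertex_expansion V E > ereal \<kappa>0 \<and> 0 < t \<and> t \<le> real (card V) \<longrightarrow>
      (Max ((\<lambda>x. integral {0..t} (\<lambda>s. heat_kernel V E s x x)) ` V))
        / (Min ((\<lambda>x. integral {0..t} (\<lambda>s. heat_kernel V E s x x)) ` V))
      + Max ((\<lambda>x. integral {0..t} (\<lambda>s. heat_kernel V E s x x)) ` V) < C"
proof (intro exI allI impI)
  fix V E and t :: real
  assume H: "simple_graph V E \<and> connected_graph V E \<and> (\<forall>x\<in>V. real (degree V E x) \<le> dbar)
    \<and> vertex_expansion V E > ereal \<kappa>0 \<and> 0 < t \<and> t \<le> real (card V)"
  then interpret vertex_expander V E dbar \<kappa>0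
    using assms by unfold_locales auto
  show "Max ((\<lambda>x. integral {0..t} (\<lambda>s. heat_kernel V E s x x)) ` V)
        / Min ((\<lambda>x. integral {0..t} (\<lambda>s. heat_kernel V E s x x)) ` V)
      + Max ((\<lambda>x. integral {0..t} (\<lambda>s. heat_kernel V E s x x)) ` V)
      < (2 + 1 / decay_rate \<kappa>0 dbar) * exp (2 * dbar) + (1 + 1 / decay_rate \<kappa>0 dbar) + 1"
    using heat_integral_ratio_bound[of t] H by linarith
qed

end
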